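(* Let $\mathbf a:\mathbb R^D\to\mathcal H$ define a dictionary $\mathcal A=\{\mathbf a(\theta):\theta\in\mathbb R^D\}$ in a real Hilbert space $\mathcal H$ whose kernel $\kappa$ is admissible, and let $\mathcal S^\star=\{\theta^\star_\ell\}_{\ell=1}^k\subset\mathbb R^D$ (pairwise distinct) be admissible with respect to $\kappa$. Then for every subset $\mathcal S\subseteq\mathcal S^\star$, OMP achieves exact $\mathrm{card}(\mathcal S)$-step recovery of $\mathcal S$.
   Context: Kernel: $\kappa(\theta,\theta')=\langle\mathbf a(\theta),\mathbf a(\theta')\rangle$. The kernel is admissible if: (i) $\kappa(\theta,\theta)=1$ for all $\theta$; $\lim_{\theta'\to\theta}\kappa(\theta,\theta')=1$ for all $\theta$; for every $\varepsilon>0$ and $\theta$ there is a compact $K$ with $\sup_{\theta'\notin K}\kappa(\theta',\theta)<\varepsilon$; (ii) $0\le\kappa(\theta,\theta')<1$ whenever $\theta\ne\theta'$. A support $\mathcal S^\star=\{\theta^\star_\ell\}_{\ell=1}^k$ is admissible with respect to $\kappa$ if for every nonempty $T\subseteq\{1,\dots,k\}$ and every positive reals $\{c_\ell\}_{\ell\in T}$ with $\sum_{\ell\in T}c_\ell<1$, setting $\psi(\theta)=\sum_{\ell\in T}c_\ell\kappa(\theta,\theta^\star_\ell)$: (i) the set of global maximizers of $\psi$ over $\mathbb R^D$ is contained in $\{\theta^\star_\ell\}_{\ell\in T}$; (ii) if $\ell\in\{1,\dots,k\}\setminus T$ satisfies $\psi(\theta)-\kappa(\theta,\theta^\star_\ell)\le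 0$ for all $\theta\in\{\theta^\star_{\ell'}\}_{\ell'\in T}$, then $\psi(\theta)-\kappa(\theta,\theta^\star_\ell)\le0$ for all $\theta\in\mathbb R^D$. OMP with input $\mathbf y\in\mathcal H$: set $\mathbf r=\mathbf y$, $\widehat{\mathcal S}=\emptyset$, $t=0$; while $\mathbf r\ne 0$: $t\leftarrow t+1$; choose any $\widehat\theta_t\in\arg\max_{\theta}|\langle\mathbf a(\theta),\mathbf r\rangle|$; $\widehat{\mathcal S}\leftarrow\widehat{\mathcal S}\cup\{\widehat\theta_t\}$; compute $(\widehat c_1,\dots,\widehat c_t)\in\arg\min_{c\in\mathbb R^t}\|\mathbf y-\sum_{\ell=1}^t c_\ell\mathbf a(\widehat\theta_\ell)\|$; set $\mathbf r=\mathbf y-\sum_{\ell=1}^t\widehat c_\ell\mathbf a(\widehat\theta_\ell)$. Output $\widehat{\mathcal S}$. A reachable support is any output $\widehat{\mathcal S}$ obtainable through some sequence of choices of maximizers. For a finite set $\mathcal S^\star=\{\theta^\star_\ell\}_{\ell=1}^k$ of pairwise distinct parameters, OMP achieves exact $k$-step recovery of $\mathcal S^\star$ if for every choice of nonzero reals $c_1,\dots,c_k$ every reachable support of OMP with input $\mathbf y=\sum_{\ell=1}^k c_\ell\mathbf a(\theta^\star_\ell)$ equals $\mathcal S^\star$ (for $\mathcal S^\star=\emptyset$ this holds trivially). *)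

theory Defs
  imports "HOL-Analysis.Analysis"
begin

definition kernel :: "(real ^ 'd \<Rightarrow> 'h::real_inner) \<Rightarrow> real ^ 'd \<Rightarrow> real ^ 'd \<Rightarrow> real" where
  "kernel a \<theta> \<theta>' = inner (a \<theta>) (a \<theta>')"

definition admissible_kernel :: "(real ^ 'd \<Rightarrow> 'h::real_inner) \<Rightarrow> bool" where
  "admissible_kernel a \<longleftrightarrow>
     (\<forall>\<theta>. kernel a \<theta> \<theta> = 1)
   \<and> (\<forall>\<theta>. ((\<lambda>\<theta>'. kernel a \<theta> \<theta>') \<longlongrightarrow> 1) (at \<theta>))
   \<and> (\<forall>\<epsilon>>0. \<forall>\<theta>. \<exists>K. compact K \<and> (SUP \<theta>'\<in>- K. kernel a \<theta>' \<theta>) < \<epsilon>)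
   \<and> (\<forall>\<theta> \<theta>'. \<theta> \<noteq> \<theta>' \<longrightarrow> 0 \<le> kernel a \<theta> \<theta>' \<and> kernel a \<theta> \<theta>' < 1)"

text \<open>Support {theta_1,...,theta_k} given by an indexing function on {1..k}.\<close>
definition admissible_support ::
  "(real ^ 'd \<Rightarrow> 'h::real_inner) \<Rightarrow> nat \<Rightarrow> (nat \<Rightarrow> real ^ 'd) \<Rightarrow> bool" where
  "admissible_support a k ths \<longleftrightarrow>
     (\<forall>T c. T \<subseteq> {1..k} \<and> T \<noteq> {} \<and> (\<forall>l\<in>T. 0 < c l) \<and> (\<Sum>l\<in>T. c l) < 1 \<longrightarrow>
        (let \<psi> = (\<lambda>\<theta>. \<Sum>l\<in>T. c l * kernel a \<theta> (ths l)) in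
          {\<theta>. \<forall>\<theta>'. \<psi> \<theta>' \<le> \<psi> \<theta>} \<subseteq> ths ` T
        \<and> (\<forall>l\<in>{1..k} - T.
             (\<forall>\<theta>\<in>ths ` T. \<psi> \<theta> - kernel a \<theta> (ths l) \<le> 0) \<longrightarrow>
             (\<forall>\<theta>. \<psi> \<theta> - kernel a \<theta> (ths l) \<le> 0))))"

text \<open>Runs of OMP with input y: omp_run a y sel r means that after selecting the
  parameters in the list sel (in order) the current residual can be r.\<close>
inductive omp_run :: "(real ^ 'd \<Rightarrow> 'h::real_inner) \<Rightarrow> 'h \<Rightarrow> (real ^ 'd) list \<Rightarrow> 'h \<Rightarrow> bool"
  for a :: "real ^ 'd \<Rightarrow> 'h" and y :: 'h where
  init: "omp_run a y [] y"
| step: "\<lbrakk> omp_run a y sel r; r \<noteq> 0;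
           \<forall>\<theta>'. \<bar>inner (a \<theta>') r\<bar> \<le> \<bar>inner (a \<theta>) r\<bar>;
           t = Suc (length sel);
           \<forall>c'. norm (y - (\<Sum>l<t. c l *\<^sub>R a ((sel @ [\<theta>]) ! l)))
                 \<le> norm (y - (\<Sum>l<t. c' l *\<^sub>R a ((sel @ [\<theta>]) ! l))) \<rbrakk>
         \<Longrightarrow> omp_run a y (sel @ [\<theta>]) (y - (\<Sum>l<t. c l *\<^sub>R a ((sel @ [\<theta>]) ! l)))"

definition omp_reachable_support :: "(real ^ 'd \<Rightarrow> 'h::real_inner) \<Rightarrow> 'h \<Rightarrow> (real ^ 'd) set \<Rightarrow> bool" where
  "omp_reachable_support a y S \<longleftrightarrow> (\<exists>sel. omp_run a y sel 0 \<and> S = set sel)"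

definition omp_exact_recovery :: "(real ^ 'd \<Rightarrow> 'h::real_inner) \<Rightarrow> (real ^ 'd) set \<Rightarrow> bool" where
  "omp_exact_recovery a S \<longleftrightarrow>
     (\<forall>c. (\<forall>\<theta>\<in>S. c \<theta> \<noteq> 0) \<longrightarrow>
        (\<forall>S'. omp_reachable_support a (\<Sum>\<theta>\<in>S. c \<theta> *\<^sub>R a \<theta>) S' \<longrightarrow> S' = S))"

end

theory Submission
  imports Defs
begin

text \<open>The proof runs through a nonnegative form of Tropp's exact recovery condition
  (\<open>ERC\<close> below): for every \<open>A \<subseteq> S\<^sup>\<star>\<close>, the coefficients of the orthogonal projection of
  any atom \<open>a \<theta>\<close>, \<open>\<theta> \<notin> A\<close>, onto the span of \<open>a ` A\<close> are nonnegative and sum to less than 1.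
  It is proved by induction on \<open>card A\<close>. Nonnegativity of the coefficient at \<open>q \<in> A\<close> comes
  from the residual of \<open>a q\<close> against \<open>A - {q}\<close>, whose correlation with every atom is
  nonnegative by the second support condition. For the sum bound, take \<open>w\<close> in the span of
  \<open>a ` A\<close> with \<open>\<langle>a y, w\<rangle> = 1\<close> on \<open>A\<close>: its coefficients are positive, so by the first support
  condition (compactness providing a maximiser) \<open>\<langle>a \<theta>, w\<rangle> < 1\<close> off \<open>A\<close>, while \<open>\<langle>a \<theta>, w\<rangle>\<close>
  is exactly the coefficient sum. Given the condition, each greedy choice of OMP lies in \<open>S\<close>,
  and since the atoms of \<open>S\<close> are linearly independent, a vanishing residual forces every
  element of \<open>S\<close> to be chosen.\<close>

definition ERC :: "('p \<Rightarrow> 'h::real_inner) \<Rightarrow> 'p set \<Rightarrow> bool" where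
  "ERC a A \<longleftrightarrow> (\<forall>\<theta> b. \<theta> \<notin> A \<longrightarrow>
      (\<forall>y\<in>A. inner (a \<theta> - (\<Sum>x\<in>A. b x *\<^sub>R a x)) (a y) = 0) \<longrightarrow>
      (\<forall>x\<in>A. 0 \<le> b x) \<and> (\<Sum>x\<in>A. b x) < 1)"

lemma exists_orthogonal_projection:
  fixes a :: "'p \<Rightarrow> 'h::real_inner"
  assumes "finite B"
  shows "\<exists>\<beta>. \<forall>y\<in>B. inner (v - (\<Sum>z\<in>B. \<beta> z *\<^sub>R a z)) (a y) = 0"
  using assms
proof (induction B arbitrary: v rule: finite_induct)
  case empty
  then show ?case by simp
next
  case (insert q B)
  have orth_span: "inner w (\<Sum>z\<in>B. g z *\<^sub>R a z) = 0" if "\<forall>y\<in>B. inner w (a y) = 0" for w g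
    using that by (simp add: inner_sum_right)
  obtain \<beta> where \<beta>: "\<forall>y\<in>B. inner (v - (\<Sum>z\<in>B. \<beta> z *\<^sub>R a z)) (a y) = 0"
    using insert.IH by blast
  obtain \<beta>' where \<beta>': "\<forall>y\<in>B. inner (a q - (\<Sum>z\<in>B. \<beta>' z *\<^sub>R a z)) (a y) = 0"
    using insert.IH by blast
  define p where "p = a q - (\<Sum>z\<in>B. \<beta>' z *\<^sub>R a z)"
  define r where "r = v - (\<Sum>z\<in>B. \<beta> z *\<^sub>R a z)"
  have r_orth: "\<forall>y\<in>B. inner r (a y) = 0" using \<beta> r_def by simp
  have p_orth: "\<forall>y\<in>B. inner p (a y) = 0" using \<beta>' p_def by simp
  have aq: "a q = p + (\<Sum>z\<in>B. \<beta>' z *\<^sub>R a z)" by (simp add: p_def)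
  show ?case
  proof (cases "p = 0")
    case True
    define \<gamma> where "\<gamma> = (\<lambda>z. if z = q then 0 else \<beta> z)"
    have sum_\<gamma>: "(\<Sum>z\<in>insert q B. \<gamma> z *\<^sub>R a z) = (\<Sum>z\<in>B. \<beta> z *\<^sub>R a z)"
      using insert.hyps by (simp add: \<gamma>_def, intro sum.cong, auto)
    have "inner r (a q) = 0" using aq True orth_span[OF r_orth] by simp
    then show ?thesis using r_orth by (intro exI[of _ \<gamma>]) (auto simp: sum_\<gamma> r_def)
  next
    case False
    define t where "t = inner r p / inner p p"
    define \<gamma> where "\<gamma> = (\<lambda>z. if z = q then t else \<beta> z - t * \<beta>' z)"
    have "(\<Sum>z\<in>B. \<gamma> z *\<^sub>R a z) = (\<Sum>z\<in>B. \<beta> z *\<^sub>R a z - t *\<^sub>R (\<beta>' z *\<^sub>R a z))"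
      using insert.hyps by (intro sum.cong) (auto simp: \<gamma>_def algebra_simps)
    then have "v - (\<Sum>z\<in>insert q B. \<gamma> z *\<^sub>R a z) = r - t *\<^sub>R p"
      using insert.hyps
      by (simp add: \<gamma>_def r_def p_def algebra_simps sum_subtractf scaleR_sum_right)
    moreover have B_orth: "\<forall>y\<in>B. inner (r - t *\<^sub>R p) (a y) = 0"
      using r_orth p_orth by (simp add: inner_diff_left)
    moreover have "inner (r - t *\<^sub>R p) p = 0"
      using False by (simp add: inner_diff_left t_def)
    then have "inner (r - t *\<^sub>R p) (a q) = 0"
      using orth_span[OF B_orth] aq by (simp add: inner_add_right)
    ultimately show ?thesis by (intro exI[of _ \<gamma>]) auto
  qed
qed

lemma inner_sum_eq_single_term:
  fixes a :: "'p \<Rightarrow> 'h::real_inner"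
  assumes "finite A" "q \<in> A" "\<forall>x\<in>A - {q}. inner (a x) v = 0"
  shows "inner (\<Sum>x\<in>A. u x *\<^sub>R a x) v = u q * inner (a q) v"
proof -
  have "inner (\<Sum>x\<in>A. u x *\<^sub>R a x) v = u q * inner (a q) v + (\<Sum>x\<in>A - {q}. u x * inner (a x) v)"
    using sum.remove[OF assms(1,2)] by (simp add: inner_sum_left)
  then show ?thesis using assms(3) by simp
qed

lemma inner_eq_of_orthogonal_residual:
  fixes a :: "'p \<Rightarrow> 'h::real_inner"
  assumes "\<forall>y\<in>A. inner (v - (\<Sum>x\<in>A. b x *\<^sub>R a x)) (a y) = 0"
  shows "inner v (\<Sum>z\<in>A. g z *\<^sub>R a z) = (\<Sum>x\<in>A. b x * inner (a x) (\<Sum>z\<in>A. g z *\<^sub>R a z))"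
proof -
  have "inner (v - (\<Sum>x\<in>A. b x *\<^sub>R a x)) (\<Sum>z\<in>A. g z *\<^sub>R a z) = 0"
    using assms by (simp add: inner_sum_right)
  then show ?thesis by (simp add: inner_diff_left inner_sum_left)
qed

lemma exists_equicorrelated_combination:
  fixes a :: "'p \<Rightarrow> 'h::real_inner"
  assumes "finite A"
    and "\<forall>q\<in>A. \<exists>u. (\<forall>x\<in>A - {q}. inner (a x) (\<Sum>z\<in>A. u z *\<^sub>R a z) = 0)
                   \<and> 0 < inner (a q) (\<Sum>z\<in>A. u z *\<^sub>R a z)"
  obtains \<gamma> where "\<forall>y\<in>A. inner (a y) (\<Sum>x\<in>A. \<gamma> x *\<^sub>R a x) = 1"
proof -
  obtain U where U: "\<forall>q\<in>A. (\<forall>x\<in>A - {q}. inner (a x) (\<Sum>z\<in>A. U q z *\<^sub>R a z) = 0)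
                         \<and> 0 < inner (a q) (\<Sum>z\<in>A. U q z *\<^sub>R a z)"
    using bchoice[OF assms(2)] by blast
  define V where "V q = (\<Sum>z\<in>A. U q z *\<^sub>R a z)" for q
  define \<gamma> where "\<gamma> z = (\<Sum>q\<in>A. U q z / inner (a q) (V q))" for z
  have "(\<Sum>z\<in>A. \<gamma> z *\<^sub>R a z) = (\<Sum>q\<in>A. (1 / inner (a q) (V q)) *\<^sub>R V q)"
    unfolding \<gamma>_def V_def scaleR_sum_left scaleR_sum_right by (subst sum.swap) simp
  moreover have "inner (a y) (\<Sum>q\<in>A. (1 / inner (a q) (V q)) *\<^sub>R V q) = 1" if "y \<in> A" for y
  proof -
    have "inner (a y) (\<Sum>q\<in>A. (1 / inner (a q) (V q)) *\<^sub>R V q)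
          = (\<Sum>q\<in>A. inner (a y) (V q) / inner (a q) (V q))"
      by (simp add: inner_sum_right)
    also have "\<dots> = inner (a y) (V y) / inner (a y) (V y)"
    proof -
      have "\<forall>q\<in>A - {y}. inner (a y) (V q) = 0" using U that by (auto simp: V_def)
      then show ?thesis
        using sum.remove[OF assms(1) that, of "\<lambda>q. inner (a y) (V q) / inner (a q) (V q)"] by simp
    qed
    moreover have "0 < inner (a y) (V y)" using U that unfolding V_def by blast
    ultimately show ?thesis by simp
  qed
  ultimately have "\<forall>y\<in>A. inner (a y) (\<Sum>x\<in>A. \<gamma> x *\<^sub>R a x) = 1" by simp
  then show ?thesis by (rule that)
qed

lemma sum_nth_eq_sum_set:
  fixes f :: "'p \<Rightarrow> 'h::real_vector"
  assumes "finite S" "set xs \<subseteq> S"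
  shows "\<exists>e. (\<Sum>l<length xs. g l *\<^sub>R f (xs ! l)) = (\<Sum>x\<in>S. e x *\<^sub>R f x)"
proof -
  define e where "e x = (\<Sum>l\<in>{l. l \<in> {..<length xs} \<and> xs ! l = x}. g l)" for x
  have "(\<Sum>x\<in>S. e x *\<^sub>R f x)
        = (\<Sum>x\<in>S. \<Sum>l\<in>{l. l \<in> {..<length xs} \<and> xs ! l = x}. g l *\<^sub>R f (xs ! l))"
    unfolding e_def scaleR_sum_left by (intro sum.cong refl) auto
  also have "\<dots> = (\<Sum>l<length xs. g l *\<^sub>R f (xs ! l))"
    by (rule sum.group) (use assms in auto)
  finally show ?thesis by metis
qed

lemma omp_selection_in_support:
  fixes a :: "'p \<Rightarrow> 'h::real_inner"
  assumes "finite S" "ERC a S" "r = (\<Sum>x\<in>S. d x *\<^sub>R a x)" "r \<noteq> 0"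
    and greedy: "\<forall>\<theta>'. \<bar>inner (a \<theta>') r\<bar> \<le> \<bar>inner (a \<theta>) r\<bar>"
  shows "\<theta> \<in> S"
proof (rule ccontr)
  assume "\<theta> \<notin> S"
  obtain b where orth: "\<forall>y\<in>S. inner (a \<theta> - (\<Sum>z\<in>S. b z *\<^sub>R a z)) (a y) = 0"
    using exists_orthogonal_projection[OF assms(1)] by blast
  have b_nonneg: "\<forall>x\<in>S. 0 \<le> b x" and b_sum: "(\<Sum>x\<in>S. b x) < 1"
    using assms(2) \<open>\<theta> \<notin> S\<close> orth unfolding ERC_def by blast+
  define M where "M = \<bar>inner (a \<theta>) r\<bar>"
  have "M = \<bar>\<Sum>x\<in>S. b x * inner (a x) r\<bar>"
    using inner_eq_of_orthogonal_residual[OF orth, of d] assms(3) M_def by simp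
  also have "\<dots> \<le> (\<Sum>x\<in>S. b x * M)"
    using b_nonneg greedy unfolding M_def
    by (intro order.trans[OF sum_abs] sum_mono) (simp add: abs_mult mult_left_mono)
  also have "\<dots> = (\<Sum>x\<in>S. b x) * M" by (simp add: sum_distrib_right)
  finally have "M \<le> 0"
    using b_sum by (smt (verit) mult_less_cancel_right2)
  then have "\<forall>x\<in>S. inner (a x) r = 0" using greedy unfolding M_def by (metis abs_le_zero_iff order.trans)
  then have "inner r r = 0" by (subst (1) assms(3)) (simp add: inner_sum_left)
  then show False using assms(4) by simp
qed

lemma omp_run_in_span:
  fixes a :: "real ^ 'd \<Rightarrow> 'h::real_inner"
  assumes "omp_run a y sel r" "finite S" "ERC a S" "y = (\<Sum>x\<in>S. c x *\<^sub>R a x)"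
  shows "set sel \<subseteq> S \<and> (\<exists>e. y - r = (\<Sum>x\<in>set sel. e x *\<^sub>R a x)) \<and> (\<exists>d. r = (\<Sum>x\<in>S. d x *\<^sub>R a x))"
  using assms(1)
proof (induction rule: omp_run.induct)
  case init
  then show ?case using assms(4) by auto
next
  case (step sel r \<theta> t c')
  let ?sel = "sel @ [\<theta>]"
  let ?approx = "\<Sum>l<t. c' l *\<^sub>R a (?sel ! l)"
  obtain d where "r = (\<Sum>x\<in>S. d x *\<^sub>R a x)" using step.IH by blast
  from omp_selection_in_support[OF assms(2,3) this step.hyps(2,3)] have "\<theta> \<in> S" .
  then have sel_S: "set ?sel \<subseteq> S" using step.IH by auto
  have approx: "?approx = (\<Sum>l<length ?sel. c' l *\<^sub>R a (?sel ! l))"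
    using step.hyps(4) by simp
  obtain e where e: "?approx = (\<Sum>x\<in>set ?sel. e x *\<^sub>R a x)"
    unfolding approx using sum_nth_eq_sum_set[OF finite_set order_refl] by blast
  obtain e' where "?approx = (\<Sum>x\<in>S. e' x *\<^sub>R a x)"
    unfolding approx using sum_nth_eq_sum_set[OF assms(2) sel_S] by blast
  then have resid: "y - ?approx = (\<Sum>x\<in>S. (c x - e' x) *\<^sub>R a x)"
    using assms(4) by (simp add: scaleR_diff_left sum_subtractf)
  show ?case
  proof (intro conjI exI)
    show "set ?sel \<subseteq> S" by (fact sel_S)
    show "y - (y - ?approx) = (\<Sum>x\<in>set ?sel. e x *\<^sub>R a x)" using e by simp
    show "y - ?approx = (\<Sum>x\<in>S. (c x - e' x) *\<^sub>R a x)" by (fact resid)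
  qed
qed

locale admissible_dictionary =
  fixes a :: "real ^ 'd \<Rightarrow> 'h::real_inner"
  assumes admissible: "admissible_kernel a"
begin

lemma kernel_self [simp]: "kernel a \<theta> \<theta> = 1"
  using admissible unfolding admissible_kernel_def by (elim conjE) (rule spec)

lemma kernel_tendsto_1: "((\<lambda>\<theta>'. kernel a \<theta> \<theta>') \<longlongrightarrow> 1) (at \<theta>)"
  using admissible unfolding admissible_kernel_def by (elim conjE) (rule spec)

lemma kernel_small_outside_compact:
  "0 < \<epsilon> \<Longrightarrow> \<exists>K. compact K \<and> (SUP \<theta>'\<in>- K. kernel a \<theta>' \<theta>) < \<epsilon>"
  using admissible unfolding admissible_kernel_def by (elim conjE) blast

lemma kernel_off_diagonal: "\<theta> \<noteq> \<theta>' \<Longrightarrow> 0 \<le> kernel a \<theta> \<theta>' \<and> kernel a \<theta> \<theta>' < 1"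
  using admissible unfolding admissible_kernel_def by (elim conjE) blast

lemma kernel_nonneg: "0 \<le> kernel a \<theta> \<theta>'"
  using kernel_off_diagonal by (cases "\<theta> = \<theta>'") auto

lemma kernel_le_1: "kernel a \<theta> \<theta>' \<le> 1"
  using kernel_off_diagonal by (cases "\<theta> = \<theta>'") (auto intro: less_imp_le)

lemma continuous_on_dictionary: "continuous_on UNIV a"
proof -
  have "isCont a \<theta>" for \<theta>
  proof -
    have norm_eq: "norm (a s - a \<theta>) = sqrt (2 - 2 * kernel a \<theta> s)" for s
    proof -
      have "(norm (a s - a \<theta>))\<^sup>2 = inner (a s - a \<theta>) (a s - a \<theta>)"
        by (simp add: power2_norm_eq_inner)
      also have "\<dots> = kernel a s s - 2 * kernel a \<theta> s + kernel a \<theta> \<theta>"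
        by (simp add: kernel_def inner_diff_left inner_diff_right inner_commute)
      also have "\<dots> = 2 - 2 * kernel a \<theta> s" by simp
      finally show ?thesis by (metis norm_ge_zero real_sqrt_unique)
    qed
    have "((\<lambda>s. 2 - 2 * kernel a \<theta> s) \<longlongrightarrow> 2 - 2 * 1) (at \<theta>)"
      by (intro tendsto_diff tendsto_mult tendsto_const kernel_tendsto_1)
    then have "((\<lambda>s. sqrt (2 - 2 * kernel a \<theta> s)) \<longlongrightarrow> sqrt (2 - 2 * 1)) (at \<theta>)"
      by (rule tendsto_real_sqrt)
    then have "((\<lambda>s. norm (a s - a \<theta>)) \<longlongrightarrow> 0) (at \<theta>)"
      by (simp add: norm_eq)
    then have "((\<lambda>s. a s - a \<theta>) \<longlongrightarrow> 0) (at \<theta>)"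
      by (rule tendsto_norm_zero_cancel)
    then show ?thesis by (simp add: isCont_def LIM_zero_iff)
  qed
  then show ?thesis by (simp add: continuous_at_imp_continuous_on)
qed

text \<open>The compactness clause of admissibility makes a nonnegative combination of kernels
  small outside a compact set, so it attains its supremum there.\<close>
lemma kernel_combination_has_maximizer:
  assumes "finite A" "\<forall>x\<in>A. 0 \<le> c x" "0 < (\<Sum>x\<in>A. c x * kernel a \<theta>\<^sub>0 x)"
  obtains m where "\<forall>\<theta>. (\<Sum>x\<in>A. c x * kernel a \<theta> x) \<le> (\<Sum>x\<in>A. c x * kernel a m x)"
proof -
  define F where "F \<theta> = (\<Sum>x\<in>A. c x * kernel a \<theta> x)" for \<theta>
  define G where "G = (\<Sum>x\<in>A. c x)"
  define \<epsilon> where "\<epsilon> = F \<theta>\<^sub>0 / (G + 1)"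
  have "0 \<le> G" unfolding G_def using assms(2) by (simp add: sum_nonneg)
  then have \<epsilon>: "0 < \<epsilon>" "G * \<epsilon> < F \<theta>\<^sub>0"
    using assms(3) by (auto simp: \<epsilon>_def F_def field_simps)
  have "\<forall>y\<in>A. \<exists>K. compact K \<and> (SUP \<theta>\<in>- K. kernel a \<theta> y) < \<epsilon>"
    using kernel_small_outside_compact[OF \<epsilon>(1)] by blast
  from bchoice[OF this]
  obtain K where K: "\<forall>y\<in>A. compact (K y) \<and> (SUP \<theta>\<in>- K y. kernel a \<theta> y) < \<epsilon>"
    by blast
  define C where "C = insert \<theta>\<^sub>0 (\<Union>y\<in>A. K y)"
  have "compact C" unfolding C_def using K assms(1) by (intro compact_insert compact_UN) auto
  moreover have "continuous_on C F"
    unfolding F_def kernel_def by (intro continuous_intros continuous_on_subset[OF continuous_on_dictionary]) auto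
  ultimately obtain m where m: "m \<in> C" "\<forall>\<theta>\<in>C. F \<theta> \<le> F m"
    using continuous_attains_sup[of C F] C_def by blast
  have outside: "F \<theta> < F \<theta>\<^sub>0" if "\<theta> \<notin> C" for \<theta>
  proof -
    have "kernel a \<theta> y \<le> \<epsilon>" if "y \<in> A" for y
    proof -
      have "kernel a \<theta> y \<le> (SUP \<theta>\<in>- K y. kernel a \<theta> y)"
        using \<open>\<theta> \<notin> C\<close> that kernel_le_1 unfolding C_def by (intro cSUP_upper bdd_aboveI) auto
      then show ?thesis using K that by force
    qed
    then have "F \<theta> \<le> (\<Sum>x\<in>A. c x * \<epsilon>)"
      unfolding F_def using assms(2) by (intro sum_mono mult_left_mono) auto
    also have "\<dots> = G * \<epsilon>" by (simp add: G_def sum_distrib_right)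
    finally show ?thesis using \<epsilon> by simp
  qed
  have "F \<theta>\<^sub>0 \<le> F m" using m C_def by simp
  then have "F \<theta> \<le> F m" for \<theta>
    using m(2) outside[of \<theta>] by (cases "\<theta> \<in> C") auto
  then show ?thesis using that unfolding F_def by blast
qed

lemma lincomb_eq_0_imp_coeff_eq_0:
  assumes "finite A" "q \<in> A" "ERC a (A - {q})" "(\<Sum>x\<in>A. u x *\<^sub>R a x) = 0"
  shows "u q = 0"
proof (rule ccontr)
  assume "u q \<noteq> 0"
  define b where "b x = - u x / u q" for x
  have "u q *\<^sub>R a q + (\<Sum>x\<in>A - {q}. u x *\<^sub>R a x) = (\<Sum>x\<in>A. u x *\<^sub>R a x)"
    by (rule sum.remove[OF assms(1,2), symmetric])
  then have rest: "(\<Sum>x\<in>A - {q}. u x *\<^sub>R a x) = - (u q *\<^sub>R a q)"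
    using assms(4) by (simp add: eq_neg_iff_add_eq_0 add.commute)
  have "(\<Sum>x\<in>A - {q}. b x *\<^sub>R a x) = (- 1 / u q) *\<^sub>R (\<Sum>x\<in>A - {q}. u x *\<^sub>R a x)"
    by (simp add: b_def scaleR_sum_right)
  then have aq: "a q = (\<Sum>x\<in>A - {q}. b x *\<^sub>R a x)"
    using rest \<open>u q \<noteq> 0\<close> by simp
  then have "\<forall>y\<in>A - {q}. inner (a q - (\<Sum>x\<in>A - {q}. b x *\<^sub>R a x)) (a y) = 0"
    by simp
  then have b_nonneg: "\<forall>x\<in>A - {q}. 0 \<le> b x" and b_sum: "(\<Sum>x\<in>A - {q}. b x) < 1"
    using assms(3) unfolding ERC_def by blast+
  have "1 = inner (\<Sum>x\<in>A - {q}. b x *\<^sub>R a x) (a q)"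
    using kernel_self[of q] unfolding kernel_def by (simp flip: aq)
  also have "\<dots> = (\<Sum>x\<in>A - {q}. b x * kernel a x q)"
    by (simp add: inner_sum_left kernel_def)
  also have "\<dots> \<le> (\<Sum>x\<in>A - {q}. b x)"
    using b_nonneg kernel_le_1 by (intro sum_mono) (simp add: mult_left_le)
  finally show False using b_sum by simp
qed

lemma omp_exact_recovery_if_ERC:
  assumes "finite S" "\<forall>A\<subseteq>S. ERC a A"
  shows "omp_exact_recovery a S"
  unfolding omp_exact_recovery_def omp_reachable_support_def
proof (intro allI impI)
  fix c S' assume c_nonzero: "\<forall>\<theta>\<in>S. c \<theta> \<noteq> 0"
    and "\<exists>sel. omp_run a (\<Sum>\<theta>\<in>S. c \<theta> *\<^sub>R a \<theta>) sel 0 \<and> S' = set sel"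
  then obtain sel where run: "omp_run a (\<Sum>\<theta>\<in>S. c \<theta> *\<^sub>R a \<theta>) sel 0" and S': "S' = set sel"
    by blast
  obtain e where sel_S: "set sel \<subseteq> S" and e: "(\<Sum>\<theta>\<in>S. c \<theta> *\<^sub>R a \<theta>) = (\<Sum>x\<in>set sel. e x *\<^sub>R a x)"
    using omp_run_in_span[OF run assms(1) _ refl] assms(2) by auto
  define u where "u x = c x - (if x \<in> set sel then e x else 0)" for x
  have "(\<Sum>x\<in>S. (if x \<in> set sel then e x else 0) *\<^sub>R a x)
        = (\<Sum>x\<in>set sel. (if x \<in> set sel then e x else 0) *\<^sub>R a x)"
    by (rule sum.mono_neutral_right[OF assms(1) sel_S]) auto
  also have "\<dots> = (\<Sum>x\<in>set sel. e x *\<^sub>R a x)" by (rule sum.cong) auto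
  finally have "(\<Sum>x\<in>set sel. e x *\<^sub>R a x) = (\<Sum>x\<in>S. (if x \<in> set sel then e x else 0) *\<^sub>R a x)" ..
  then have "(\<Sum>x\<in>S. u x *\<^sub>R a x) = 0"
    using e by (simp add: u_def scaleR_diff_left sum_subtractf)
  then have "u q = 0" if "q \<in> S" for q
    using lincomb_eq_0_imp_coeff_eq_0[OF assms(1) that] assms(2) by blast
  then have "S \<subseteq> set sel" using c_nonzero by (auto simp: u_def split: if_splits)
  then show "S' = S" using sel_S S' by auto
qed

end

locale admissible_support_dictionary = admissible_dictionary a
  for a :: "real ^ 'd \<Rightarrow> 'h::real_inner" +
  fixes k :: nat and ths :: "nat \<Rightarrow> real ^ 'd"
  assumes inj_ths: "inj_on ths {1..k}"
    and admissible_supp: "admissible_support a k ths"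
begin

abbreviation Sstar :: "(real ^ 'd) set" where
  "Sstar \<equiv> ths ` {1..k}"

lemma admissible_support_on_subsets:
  assumes "A \<subseteq> Sstar" "A \<noteq> {}" "\<forall>x\<in>A. 0 < c x" "(\<Sum>x\<in>A. c x) < 1"
  defines "\<psi> \<equiv> \<lambda>\<theta>. \<Sum>x\<in>A. c x * kernel a \<theta> x"
  shows support_maximizer: "\<forall>\<theta>'. \<psi> \<theta>' \<le> \<psi> \<theta> \<Longrightarrow> \<theta> \<in> A"
    and support_dominance:
      "\<lbrakk>l \<in> Sstar; l \<notin> A; \<forall>y\<in>A. \<psi> y \<le> kernel a y l\<rbrakk> \<Longrightarrow> \<psi> \<theta> \<le> kernel a \<theta> l"
proof -
  define T where "T = {i\<in>{1..k}. ths i \<in> A}"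
  have T: "T \<subseteq> {1..k}" "ths ` T = A"
    using assms(1) unfolding T_def by auto
  have "inj_on ths T" using T(1) by (rule inj_on_subset[OF inj_ths])
  have reindex: "(\<Sum>i\<in>T. g (ths i)) = (\<Sum>x\<in>A. g x)" for g :: "_ \<Rightarrow> real"
    using sum.reindex[OF \<open>inj_on ths T\<close>, of g] T(2) by simp
  have psi_T: "(\<Sum>i\<in>T. c (ths i) * kernel a \<theta> (ths i)) = \<psi> \<theta>" for \<theta>
    unfolding \<psi>_def by (rule reindex)
  have "T \<subseteq> {1..k} \<and> T \<noteq> {} \<and> (\<forall>i\<in>T. 0 < c (ths i)) \<and> (\<Sum>i\<in>T. c (ths i)) < 1"
    using T assms(2,3,4) reindex[of c] by auto
  from admissible_supp[unfolded admissible_support_def Let_def, rule_format, OF this]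
  have "{\<theta>. \<forall>\<theta>'. (\<Sum>i\<in>T. c (ths i) * kernel a \<theta>' (ths i)) \<le> (\<Sum>i\<in>T. c (ths i) * kernel a \<theta> (ths i))} \<subseteq> ths ` T
      \<and> (\<forall>l\<in>{1..k} - T. (\<forall>\<theta>\<in>ths ` T. (\<Sum>i\<in>T. c (ths i) * kernel a \<theta> (ths i)) - kernel a \<theta> (ths l) \<le> 0)
           \<longrightarrow> (\<forall>\<theta>. (\<Sum>i\<in>T. c (ths i) * kernel a \<theta> (ths i)) - kernel a \<theta> (ths l) \<le> 0))"
    by blast
  then have cond: "{\<theta>. \<forall>\<theta>'. \<psi> \<theta>' \<le> \<psi> \<theta>} \<subseteq> A
      \<and> (\<forall>l\<in>{1..k} - T. (\<forall>\<theta>\<in>A. \<psi> \<theta> - kernel a \<theta> (ths l) \<le> 0) \<longrightarrow> (\<forall>\<theta>. \<psi> \<theta> - kernel a \<theta> (ths l) \<le> 0))"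
    by (simp only: psi_T T(2)) blast
  show "\<forall>\<theta>'. \<psi> \<theta>' \<le> \<psi> \<theta> \<Longrightarrow> \<theta> \<in> A" using cond by blast
  assume "l \<in> Sstar" "l \<notin> A" "\<forall>y\<in>A. \<psi> y \<le> kernel a y l"
  then obtain i where i: "i \<in> {1..k}" "l = ths i" by blast
  then have "i \<in> {1..k} - T" using \<open>l \<notin> A\<close> unfolding T_def by simp
  then show "\<psi> \<theta> \<le> kernel a \<theta> l" using cond \<open>\<forall>y\<in>A. \<psi> y \<le> kernel a y l\<close> i(2) by force
qed

lemma kernel_combination_dominated:
  assumes "A \<subseteq> Sstar" "l \<in> Sstar" "l \<notin> A" "\<forall>x\<in>A. 0 \<le> c x" "(\<Sum>x\<in>A. c x) < 1"
    and "\<forall>y\<in>A. (\<Sum>x\<in>A. c x * kernel a y x) \<le> kernel a y l"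
  shows "(\<Sum>x\<in>A. c x * kernel a \<theta> x) \<le> kernel a \<theta> l"
proof -
  define A' where "A' = {x\<in>A. 0 < c x}"
  have fin: "finite A" using assms(1) finite_subset by blast
  have restrict: "(\<Sum>x\<in>A. c x * kernel a s x) = (\<Sum>x\<in>A'. c x * kernel a s x)" for s
    using fin assms(4) unfolding A'_def by (intro sum.mono_neutral_right) force+
  show ?thesis
  proof (cases "A' = {}")
    case True
    then show ?thesis using restrict kernel_nonneg by simp
  next
    case False
    have "(\<Sum>x\<in>A'. c x) \<le> (\<Sum>x\<in>A. c x)"
      using fin assms(4) unfolding A'_def by (intro sum_mono2) auto
    then have "(\<Sum>x\<in>A'. c x) < 1" using assms(5) by simp
    moreover have "A' \<subseteq> Sstar" "l \<notin> A'" "\<forall>x\<in>A'. 0 < c x"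
      using assms(1,3) unfolding A'_def by auto
    moreover have "\<forall>y\<in>A'. (\<Sum>x\<in>A'. c x * kernel a y x) \<le> kernel a y l"
      using assms(6) restrict unfolding A'_def by auto
    ultimately show ?thesis
      using support_dominance[OF _ False, of c l \<theta>] assms(2) restrict by simp
  qed
qed

text \<open>Scaling by \<open>1 / (2 \<Sum> \<gamma>)\<close> brings the weights under the budget of the first support
  condition without changing the maximisers.\<close>
lemma kernel_combination_lt_1_outside:
  assumes "A \<subseteq> Sstar" "A \<noteq> {}" "\<forall>x\<in>A. 0 < \<gamma> x"
    and "\<forall>y\<in>A. (\<Sum>x\<in>A. \<gamma> x * kernel a y x) = 1" "\<theta> \<notin> A"
  shows "(\<Sum>x\<in>A. \<gamma> x * kernel a \<theta> x) < 1"
proof -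
  have fin: "finite A" using assms(1) finite_subset by blast
  define G where "G = (\<Sum>x\<in>A. \<gamma> x)"
  have "0 < G" unfolding G_def using fin assms(2,3) by (intro sum_pos) auto
  define c where "c x = \<gamma> x / (2 * G)" for x
  define F where "F s = (\<Sum>x\<in>A. c x * kernel a s x)" for s
  have F_eq: "F s = (\<Sum>x\<in>A. \<gamma> x * kernel a s x) / (2 * G)" for s
    unfolding F_def c_def by (simp add: sum_divide_distrib)
  have c_pos: "\<forall>x\<in>A. 0 < c x" and c_sum: "(\<Sum>x\<in>A. c x) < 1"
    using assms(3) \<open>0 < G\<close> by (auto simp: c_def G_def simp flip: sum_divide_distrib)
  obtain y where "y \<in> A" using assms(2) by blast
  then have "F y = 1 / (2 * G)" using assms(4) F_eq by simp
  then obtain m where m: "\<forall>s. F s \<le> F m"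
    using kernel_combination_has_maximizer[OF fin, of c y] c_pos \<open>0 < G\<close> unfolding F_def
    by (metis less_imp_le zero_less_divide_1_iff zero_less_mult_iff zero_less_numeral)
  have "m \<in> A" using support_maximizer[OF assms(1,2) c_pos c_sum] m unfolding F_def by blast
  then have "F m = 1 / (2 * G)" using assms(4) F_eq by simp
  moreover have "F \<theta> \<noteq> F m"
    using support_maximizer[OF assms(1,2) c_pos c_sum, of \<theta>] m assms(5) unfolding F_def by force
  ultimately have "F \<theta> < 1 / (2 * G)" using m by (metis order_less_le)
  then show ?thesis using \<open>0 < G\<close> F_eq by (simp add: field_simps)
qed

text \<open>The combination is \<open>a q\<close> minus its projection onto the span of \<open>a ` (A - {q})\<close>.\<close>
lemma exists_separating_combination:
  assumes "A \<subseteq> Sstar" "q \<in> A" "ERC a (A - {q})"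
  obtains u where "\<forall>x\<in>A - {q}. inner (a x) (\<Sum>z\<in>A. u z *\<^sub>R a z) = 0"
    "0 < inner (a q) (\<Sum>z\<in>A. u z *\<^sub>R a z)"
    "\<forall>\<theta>. 0 \<le> inner (a \<theta>) (\<Sum>z\<in>A. u z *\<^sub>R a z)"
    "0 < (\<Sum>z\<in>A. u z)"
proof -
  define A\<^sub>0 where "A\<^sub>0 = A - {q}"
  have fin: "finite A" using assms(1) finite_subset by blast
  obtain \<beta> where \<beta>: "\<forall>y\<in>A\<^sub>0. inner (a q - (\<Sum>z\<in>A\<^sub>0. \<beta> z *\<^sub>R a z)) (a y) = 0"
    using exists_orthogonal_projection[of A\<^sub>0] fin A\<^sub>0_def by blast
  then have \<beta>_nonneg: "\<forall>x\<in>A\<^sub>0. 0 \<le> \<beta> x" and \<beta>_sum: "(\<Sum>x\<in>A\<^sub>0. \<beta> x) < 1"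
    using assms(3) unfolding ERC_def A\<^sub>0_def by blast+
  define u where "u z = (if z = q then 1 else - \<beta> z)" for z
  define V where "V = a q - (\<Sum>z\<in>A\<^sub>0. \<beta> z *\<^sub>R a z)"
  have "(\<Sum>z\<in>A. u z *\<^sub>R a z) = V" "(\<Sum>z\<in>A. u z) = 1 - (\<Sum>z\<in>A\<^sub>0. \<beta> z)"
    using sum.remove[OF fin assms(2), of "\<lambda>z. u z *\<^sub>R a z"] sum.remove[OF fin assms(2), of u]
    by (simp_all add: u_def V_def A\<^sub>0_def sum_negf)
  moreover have V_orth: "\<forall>x\<in>A\<^sub>0. inner (a x) V = 0"
    using \<beta> by (simp add: V_def inner_commute)
  moreover have inner_V: "inner (a \<theta>) V = kernel a \<theta> q - (\<Sum>z\<in>A\<^sub>0. \<beta> z * kernel a \<theta> z)" for \<theta>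
    by (simp add: V_def inner_diff_right inner_sum_right kernel_def)
  moreover have "(\<Sum>z\<in>A\<^sub>0. \<beta> z * kernel a q z) \<le> (\<Sum>z\<in>A\<^sub>0. \<beta> z)"
    using \<beta>_nonneg kernel_le_1 by (intro sum_mono) (simp add: mult_left_le)
  moreover have "(\<Sum>z\<in>A\<^sub>0. \<beta> z * kernel a \<theta> z) \<le> kernel a \<theta> q" for \<theta>
  proof (rule kernel_combination_dominated)
    show "A\<^sub>0 \<subseteq> Sstar" "q \<in> Sstar" "q \<notin> A\<^sub>0" using assms(1,2) A\<^sub>0_def by auto
    show "\<forall>x\<in>A\<^sub>0. 0 \<le> \<beta> x" "(\<Sum>x\<in>A\<^sub>0. \<beta> x) < 1" by (fact \<beta>_nonneg, fact \<beta>_sum)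
    show "\<forall>y\<in>A\<^sub>0. (\<Sum>z\<in>A\<^sub>0. \<beta> z * kernel a y z) \<le> kernel a y q"
      using V_orth inner_V by fastforce
  qed
  ultimately show ?thesis using that \<beta>_sum unfolding A\<^sub>0_def by fastforce
qed

lemma ERC_coeff_nonneg:
  assumes "A \<subseteq> Sstar" "q \<in> A" "ERC a (A - {q})"
    and orth: "\<forall>y\<in>A. inner (a \<theta> - (\<Sum>x\<in>A. b x *\<^sub>R a x)) (a y) = 0"
  shows "0 \<le> b q"
proof -
  have fin: "finite A" using assms(1) finite_subset by blast
  from exists_separating_combination[OF assms(1-3)]
  obtain u where u: "\<forall>x\<in>A - {q}. inner (a x) (\<Sum>z\<in>A. u z *\<^sub>R a z) = 0"
    "0 < inner (a q) (\<Sum>z\<in>A. u z *\<^sub>R a z)" "\<forall>\<theta>. 0 \<le> inner (a \<theta>) (\<Sum>z\<in>A. u z *\<^sub>R a z)"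
    "0 < (\<Sum>z\<in>A. u z)" .
  have "inner (a \<theta>) (\<Sum>z\<in>A. u z *\<^sub>R a z) = (\<Sum>x\<in>A. b x * inner (a x) (\<Sum>z\<in>A. u z *\<^sub>R a z))"
    by (rule inner_eq_of_orthogonal_residual[OF orth])
  also have "\<dots> = inner (\<Sum>x\<in>A. b x *\<^sub>R a x) (\<Sum>z\<in>A. u z *\<^sub>R a z)"
    by (simp add: inner_sum_left)
  also have "\<dots> = b q * inner (a q) (\<Sum>z\<in>A. u z *\<^sub>R a z)"
    by (rule inner_sum_eq_single_term[OF fin assms(2) u(1)])
  finally show ?thesis using u(2,3) by (smt (verit) mult_neg_pos)
qed

lemma equicorrelated_coeff_pos:
  assumes "A \<subseteq> Sstar" "q \<in> A" "ERC a (A - {q})"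
    and \<gamma>: "\<forall>y\<in>A. inner (a y) (\<Sum>x\<in>A. \<gamma> x *\<^sub>R a x) = 1"
  shows "0 < \<gamma> q"
proof -
  have fin: "finite A" using assms(1) finite_subset by blast
  from exists_separating_combination[OF assms(1-3)]
  obtain u where u: "\<forall>x\<in>A - {q}. inner (a x) (\<Sum>z\<in>A. u z *\<^sub>R a z) = 0"
    "0 < inner (a q) (\<Sum>z\<in>A. u z *\<^sub>R a z)" "\<forall>\<theta>. 0 \<le> inner (a \<theta>) (\<Sum>z\<in>A. u z *\<^sub>R a z)"
    "0 < (\<Sum>z\<in>A. u z)" .
  have "\<gamma> q * inner (a q) (\<Sum>z\<in>A. u z *\<^sub>R a z) = inner (\<Sum>x\<in>A. \<gamma> x *\<^sub>R a x) (\<Sum>z\<in>A. u z *\<^sub>R a z)"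
    using inner_sum_eq_single_term[OF fin assms(2) u(1)] by simp
  also have "\<dots> = (\<Sum>z\<in>A. u z)"
    using \<gamma> by (subst inner_commute) (simp add: inner_sum_left)
  finally show ?thesis using u(2,4) by (metis zero_less_mult_pos2)
qed

lemma ERC_coeff_sum_lt_1:
  assumes "A \<subseteq> Sstar" "\<forall>q\<in>A. ERC a (A - {q})" "\<theta> \<notin> A"
    and orth: "\<forall>y\<in>A. inner (a \<theta> - (\<Sum>x\<in>A. b x *\<^sub>R a x)) (a y) = 0"
  shows "(\<Sum>x\<in>A. b x) < 1"
proof (cases "A = {}")
  case False
  have fin: "finite A" using assms(1) finite_subset by blast
  have "\<forall>q\<in>A. \<exists>u. (\<forall>x\<in>A - {q}. inner (a x) (\<Sum>z\<in>A. u z *\<^sub>R a z) = 0)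
                  \<and> 0 < inner (a q) (\<Sum>z\<in>A. u z *\<^sub>R a z)"
  proof
    fix q assume "q \<in> A"
    with assms(2) have "ERC a (A - {q})" by blast
    from exists_separating_combination[OF assms(1) \<open>q \<in> A\<close> this]
    obtain u where "\<forall>x\<in>A - {q}. inner (a x) (\<Sum>z\<in>A. u z *\<^sub>R a z) = 0"
      "0 < inner (a q) (\<Sum>z\<in>A. u z *\<^sub>R a z)" "\<forall>\<theta>. 0 \<le> inner (a \<theta>) (\<Sum>z\<in>A. u z *\<^sub>R a z)"
      "0 < (\<Sum>z\<in>A. u z)" .
    then show "\<exists>u. (\<forall>x\<in>A - {q}. inner (a x) (\<Sum>z\<in>A. u z *\<^sub>R a z) = 0)
                  \<and> 0 < inner (a q) (\<Sum>z\<in>A. u z *\<^sub>R a z)" by blast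
  qed
  from exists_equicorrelated_combination[OF fin this]
  obtain \<gamma> where \<gamma>: "\<forall>y\<in>A. inner (a y) (\<Sum>x\<in>A. \<gamma> x *\<^sub>R a x) = 1" .
  have \<gamma>_pos: "\<forall>x\<in>A. 0 < \<gamma> x"
    using equicorrelated_coeff_pos[OF assms(1) _ _ \<gamma>] assms(2) by blast
  have \<gamma>_one: "\<forall>y\<in>A. (\<Sum>x\<in>A. \<gamma> x * kernel a y x) = 1"
    using \<gamma> by (simp add: inner_sum_right kernel_def)
  have "(\<Sum>x\<in>A. b x) = inner (a \<theta>) (\<Sum>x\<in>A. \<gamma> x *\<^sub>R a x)"
    using inner_eq_of_orthogonal_residual[OF orth] \<gamma> by simp
  also have "\<dots> = (\<Sum>x\<in>A. \<gamma> x * kernel a \<theta> x)"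
    by (simp add: inner_sum_right kernel_def)
  also have "\<dots> < 1"
    by (rule kernel_combination_lt_1_outside[OF assms(1) False \<gamma>_pos \<gamma>_one assms(3)])
  finally show ?thesis .
qed simp

lemma ERC_on_support: "A \<subseteq> Sstar \<Longrightarrow> ERC a A"
proof (induction "card A" arbitrary: A rule: less_induct)
  case less
  have "finite A" using less.prems finite_subset by blast
  have ERC_remove: "\<forall>q\<in>A. ERC a (A - {q})"
  proof
    fix q assume "q \<in> A"
    show "ERC a (A - {q})"
    proof (rule less.hyps)
      show "card (A - {q}) < card A" using \<open>finite A\<close> \<open>q \<in> A\<close> by (rule card_Diff1_less)
      show "A - {q} \<subseteq> Sstar" using less.prems by blast
    qed
  qed
  show ?case unfolding ERC_def
  proof (intro allI impI conjI)
    fix \<theta> b assume "\<theta> \<notin> A" and orth: "\<forall>y\<in>A. inner (a \<theta> - (\<Sum>x\<in>A. b x *\<^sub>R a x)) (a y) = 0"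
    show "\<forall>x\<in>A. 0 \<le> b x"
      using ERC_coeff_nonneg[OF less.prems _ _ orth] ERC_remove by blast
    show "(\<Sum>x\<in>A. b x) < 1"
      by (rule ERC_coeff_sum_lt_1[OF less.prems ERC_remove \<open>\<theta> \<notin> A\<close> orth])
  qed
qed

end

theorem theorem2:
  fixes a :: "real ^ 'd \<Rightarrow> 'h::{real_inner, complete_space}"
    and k :: nat and ths :: "nat \<Rightarrow> real ^ 'd"
  assumes "admissible_kernel a"
    and "inj_on ths {1..k}"
    and "admissible_support a k ths"
    and "S \<subseteq> ths ` {1..k}"
  shows "omp_exact_recovery a S"
proof -
  interpret admissible_support_dictionary a k ths
    using assms(1-3) by unfold_locales
  show ?thesis
  proof (rule omp_exact_recovery_if_ERC)
    show "finite S" using assms(4) finite_subset by blast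
    show "\<forall>A\<subseteq>S. ERC a A" using assms(4) ERC_on_support by blast
  qed
qed

end
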